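(* Let $p$ be a prime, $n,m\ge1$ integers with $p>n+m+2$, $q$ a power of $p$, and let $\mathrm{res}_{n,m}\in\mathbb{F}_q[a_0,\dots,a_n,b_0,\dots,b_m]$ be the generic resultant of $f=\sum_{0\le i\le n}a_ix^i$ and $g=\sum_{0\le i\le m}b_ix^i$. Then there is no nonzero $u\in\mathbb{F}_q^{n+m+2}$ such that $\mathrm{res}_{n,m}$ shifted by $u$ equals $\mathrm{res}_{n,m}$; i.e. $\mathrm{res}_{n,m}$ is not shift-invariant.
   Context: The generic resultant $\mathrm{res}_{n,m}$ is the determinant of the $(n+m)\times(n+m)$ Sylvester matrix of $f$ and $g$ with indeterminate coefficients $a_0,\dots,a_n,b_0,\dots,b_m$. A polynomial $F$ in $N$ variables $z$ shifted by $u\in\mathbb{F}_q^N$ is $F(z-u)$. *)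

theory Defs
  imports "Subresultants.Resultant_Prelim" "HOL-Library.Poly_Mapping"
begin

text \<open>Multivariate polynomials over 'a in the variables z_0, z_1, ...:
  finitely supported maps from monomials (exponent vectors) to coefficients.\<close>
type_synonym 'a mpoly = "(nat \<Rightarrow>\<^sub>0 nat) \<Rightarrow>\<^sub>0 'a"

definition mp_const :: "'a::zero \<Rightarrow> 'a mpoly" where
  "mp_const c = Poly_Mapping.single 0 c"

definition mp_var :: "nat \<Rightarrow> 'a::{zero,one} mpoly" where
  "mp_var i = Poly_Mapping.single (Poly_Mapping.single i 1) 1"

definition mp_subst :: "(nat \<Rightarrow> 'a::comm_ring_1 mpoly) \<Rightarrow> 'a mpoly \<Rightarrow> 'a mpoly" where
  "mp_subst \<sigma> P = (\<Sum>\<mu>\<in>Poly_Mapping.keys P.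
      mp_const (Poly_Mapping.lookup P \<mu>) *
      (\<Prod>i\<in>Poly_Mapping.keys \<mu>. \<sigma> i ^ Poly_Mapping.lookup \<mu> i))"

definition mp_shift :: "'a::comm_ring_1 mpoly \<Rightarrow> (nat \<Rightarrow> 'a) \<Rightarrow> 'a mpoly" where
  "mp_shift F u = mp_subst (\<lambda>i. mp_var i - mp_const (u i)) F"

text \<open>Generic resultant res_{n,m}: determinant of the (n+m)x(n+m) Sylvester matrix of
  f = sum_{i<=n} a_i x^i and g = sum_{j<=m} b_j x^j, where a_i = z_i and b_j = z_(n+1+j).\<close>
definition generic_f :: "nat \<Rightarrow> 'a::comm_ring_1 mpoly poly" where
  "generic_f n = (\<Sum>i\<le>n. monom (mp_var i) i)"

definition generic_g :: "nat \<Rightarrow> nat \<Rightarrow> 'a::comm_ring_1 mpoly poly" where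
  "generic_g n m = (\<Sum>j\<le>m. monom (mp_var (n + 1 + j)) j)"

definition generic_res :: "nat \<Rightarrow> nat \<Rightarrow> 'a::comm_ring_1 mpoly" where
  "generic_res n m = det (sylvester_mat_sub n m (generic_f n) (generic_g n m))"

end

theory Submission
  imports Defs "HOL-Number_Theory.Cong"
begin

text \<open>Shift invariance of \<open>res\<^sub>n\<^sub>,\<^sub>m\<close> under \<open>u\<close> means that evaluating the Sylvester determinant
  at \<open>y + u\<close> and at \<open>y\<close> always gives the same value. When either \<open>f\<close> has only its top
  coefficient or \<open>g\<close> only its constant one, the Sylvester matrix is triangular and its determinant
  is \<open>a\<^sub>n\<^sup>m b\<^sub>0\<^sup>n\<close>; when \<open>f\<close> and \<open>g\<close> have a common root it vanishes. Choosing \<open>y\<close> so that one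
  of \<open>y\<close>, \<open>y + u\<close> falls in each case first forces \<open>u\<^sub>n = u\<^sub>n\<^sub>+\<^sub>1 = 0\<close>, and then, with a point \<open>r\<close>
  that is not a root of the polynomial built from the remaining shift coordinates (it exists since
  its degree is below the characteristic), all other coordinates of \<open>u\<close>.\<close>

definition mp_eval_monom :: "(nat \<Rightarrow> 'a::comm_ring_1) \<Rightarrow> (nat \<Rightarrow>\<^sub>0 nat) \<Rightarrow> 'a" where
  "mp_eval_monom x \<mu> = (\<Prod>i\<in>Poly_Mapping.keys \<mu>. x i ^ Poly_Mapping.lookup \<mu> i)"

definition mp_eval :: "(nat \<Rightarrow> 'a::comm_ring_1) \<Rightarrow> 'a mpoly \<Rightarrow> 'a" where
  "mp_eval x P = (\<Sum>\<mu>\<in>Poly_Mapping.keys P. Poly_Mapping.lookup P \<mu> * mp_eval_monom x \<mu>)"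

lemma mp_eval_monom_superset:
  "finite S \<Longrightarrow> Poly_Mapping.keys \<mu> \<subseteq> S \<Longrightarrow>
     mp_eval_monom x \<mu> = (\<Prod>i\<in>S. x i ^ Poly_Mapping.lookup \<mu> i)"
  unfolding mp_eval_monom_def
  by (rule prod.mono_neutral_left) (auto simp: in_keys_iff)

lemma mp_eval_monom_zero [simp]: "mp_eval_monom x 0 = 1"
  by (simp add: mp_eval_monom_def)

lemma mp_eval_monom_add: "mp_eval_monom x (\<mu> + \<nu>) = mp_eval_monom x \<mu> * mp_eval_monom x \<nu>"
proof -
  let ?S = "Poly_Mapping.keys \<mu> \<union> Poly_Mapping.keys \<nu>"
  have "mp_eval_monom x (\<mu> + \<nu>) = (\<Prod>i\<in>?S. x i ^ Poly_Mapping.lookup (\<mu> + \<nu>) i)"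
    by (intro mp_eval_monom_superset) (auto simp: keys_add)
  also have "\<dots> = (\<Prod>i\<in>?S. x i ^ Poly_Mapping.lookup \<mu> i) * (\<Prod>i\<in>?S. x i ^ Poly_Mapping.lookup \<nu> i)"
    by (simp add: lookup_add power_add prod.distrib)
  also have "\<dots> = mp_eval_monom x \<mu> * mp_eval_monom x \<nu>"
    by (subst (1 2) mp_eval_monom_superset[of ?S]) auto
  finally show ?thesis .
qed

lemma mp_eval_superset:
  "finite S \<Longrightarrow> Poly_Mapping.keys P \<subseteq> S \<Longrightarrow>
     mp_eval x P = (\<Sum>\<mu>\<in>S. Poly_Mapping.lookup P \<mu> * mp_eval_monom x \<mu>)"
  unfolding mp_eval_def
  by (rule sum.mono_neutral_left) (auto simp: in_keys_iff)

lemma mp_eval_add: "mp_eval x (P + Q) = mp_eval x P + mp_eval x Q"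
proof -
  let ?S = "Poly_Mapping.keys P \<union> Poly_Mapping.keys Q"
  have "mp_eval x (P + Q) = (\<Sum>\<mu>\<in>?S. Poly_Mapping.lookup (P + Q) \<mu> * mp_eval_monom x \<mu>)"
    by (intro mp_eval_superset) (auto simp: keys_add)
  also have "\<dots> = (\<Sum>\<mu>\<in>?S. Poly_Mapping.lookup P \<mu> * mp_eval_monom x \<mu>)
      + (\<Sum>\<mu>\<in>?S. Poly_Mapping.lookup Q \<mu> * mp_eval_monom x \<mu>)"
    by (simp add: lookup_add distrib_right sum.distrib)
  also have "\<dots> = mp_eval x P + mp_eval x Q"
    by (subst (1 2) mp_eval_superset[of ?S]) auto
  finally show ?thesis .
qed

lemma mp_eval_zero [simp]: "mp_eval x 0 = 0"
  by (simp add: mp_eval_def)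

lemma mp_eval_sum: "mp_eval x (sum f A) = (\<Sum>a\<in>A. mp_eval x (f a))"
  by (induction A rule: infinite_finite_induct) (auto simp: mp_eval_add)

lemma mp_eval_single [simp]: "mp_eval x (Poly_Mapping.single \<mu> c) = c * mp_eval_monom x \<mu>"
  by (cases "c = 0") (auto simp: mp_eval_def)

lemma poly_mapping_sum_single_lookup:
  "P = (\<Sum>\<mu>\<in>Poly_Mapping.keys P. Poly_Mapping.single \<mu> (Poly_Mapping.lookup P \<mu>))"
  by (rule poly_mapping_eqI)
    (auto simp: lookup_sum lookup_single when_def in_keys_iff sum.delta cong: sum.cong)

lemma mp_eval_mult: "mp_eval x (P * Q) = mp_eval x P * mp_eval x Q"
proof -
  have "P * Q = (\<Sum>\<mu>\<in>Poly_Mapping.keys P. Poly_Mapping.single \<mu> (Poly_Mapping.lookup P \<mu>)) *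
      (\<Sum>\<nu>\<in>Poly_Mapping.keys Q. Poly_Mapping.single \<nu> (Poly_Mapping.lookup Q \<nu>))"
    by (subst (1) poly_mapping_sum_single_lookup, subst (1) poly_mapping_sum_single_lookup[of Q]) simp
  also have "\<dots> = (\<Sum>\<mu>\<in>Poly_Mapping.keys P. \<Sum>\<nu>\<in>Poly_Mapping.keys Q.
      Poly_Mapping.single (\<mu> + \<nu>) (Poly_Mapping.lookup P \<mu> * Poly_Mapping.lookup Q \<nu>))"
    by (simp add: sum_product mult_single)
  finally have "mp_eval x (P * Q) = (\<Sum>\<mu>\<in>Poly_Mapping.keys P. \<Sum>\<nu>\<in>Poly_Mapping.keys Q.
      Poly_Mapping.lookup P \<mu> * Poly_Mapping.lookup Q \<nu> * (mp_eval_monom x \<mu> * mp_eval_monom x \<nu>))"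
    by (simp add: mp_eval_sum mp_eval_monom_add)
  also have "\<dots> = mp_eval x P * mp_eval x Q"
    unfolding mp_eval_def sum_product by (simp add: algebra_simps)
  finally show ?thesis .
qed

lemma mp_eval_one: "mp_eval x 1 = 1"
  using mp_eval_single[of x 0 1] by simp

interpretation mp_eval: comm_ring_hom "mp_eval x"
  by unfold_locales (auto simp: mp_eval_add mp_eval_mult mp_eval_one)

lemma mp_eval_const [simp]: "mp_eval x (mp_const c) = c"
  by (simp add: mp_const_def)

lemma mp_eval_var [simp]: "mp_eval x (mp_var i) = x i"
  by (simp add: mp_var_def mp_eval_monom_def)

lemma mp_eval_shift: "mp_eval x (mp_shift F u) = mp_eval (\<lambda>i. x i - u i) F"
  unfolding mp_shift_def mp_subst_def
  by (simp add: mp_eval_def[of _ F] mp_eval.hom_sum mp_eval.hom_mult mp_eval.hom_prod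
      mp_eval.hom_power mp_eval.hom_minus mp_eval_monom_def)

lemma mp_eval_shift_invariant:
  assumes "mp_shift F u = F"
  shows "mp_eval (\<lambda>i. x i + u i) F = mp_eval x F"
  using arg_cong[OF assms, of "mp_eval (\<lambda>i. x i + u i)"] by (simp add: mp_eval_shift)

lemma prod_diag_sylvester_mat_sub:
  fixes f g :: "'a::comm_ring_1 poly"
  shows "prod_list (diag_mat (sylvester_mat_sub n m f g)) = coeff f n ^ m * coeff g 0 ^ n"
proof -
  let ?A = "sylvester_mat_sub n m f g"
  have "prod_list (diag_mat ?A) = (\<Prod>i = 0..<m. ?A $$ (i, i)) * (\<Prod>i = m..<n + m. ?A $$ (i, i))"
    by (simp add: prod_list_diag_prod prod.atLeastLessThan_concat)
  also have "\<dots> = (\<Prod>i = 0..<m. coeff f n) * (\<Prod>i = m..<n + m. coeff g 0)"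
    by (intro arg_cong2[where f = "(*)"] prod.cong) (auto simp: sylvester_mat_sub_index)
  finally show ?thesis by simp
qed

lemma det_sylvester_mat_sub_triangular:
  fixes f g :: "'a::comm_ring_1 poly"
  assumes "(\<forall>k<n. coeff f k = 0) \<or> (\<forall>k\<ge>1. coeff g k = 0)"
  shows "det (sylvester_mat_sub n m f g) = coeff f n ^ m * coeff g 0 ^ n"
  using assms
proof
  assume "\<forall>k<n. coeff f k = 0"
  then have "det (sylvester_mat_sub n m f g) = prod_list (diag_mat (sylvester_mat_sub n m f g))"
    by (intro det_lower_triangular[of "n + m"]) (auto simp: sylvester_mat_sub_index)
  then show ?thesis by (simp add: prod_diag_sylvester_mat_sub)
next
  assume "\<forall>k\<ge>1. coeff g k = 0"
  then have "det (sylvester_mat_sub n m f g) = prod_list (diag_mat (sylvester_mat_sub n m f g))"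
    by (intro det_upper_triangular[of _ "n + m"])
      (auto simp: upper_triangular_def sylvester_mat_sub_index)
  then show ?thesis by (simp add: prod_diag_sylvester_mat_sub)
qed

lemma sum_coeff_reversed_eq_poly:
  fixes P :: "'a::comm_semiring_1 poly"
  assumes "degree P < N"
  shows "(\<Sum>j<N. coeff P (N - Suc j) * r ^ (N - Suc j)) = poly P r"
proof -
  have "(\<Sum>j<N. coeff P (N - Suc j) * r ^ (N - Suc j)) = (\<Sum>k<N. coeff P k * r ^ k)"
    by (rule sum.nat_diff_reindex)
  also have "\<dots> = (\<Sum>k\<le>degree P. coeff P k * r ^ k)"
    using assms by (intro sum.mono_neutral_right) (auto simp: coeff_eq_0)
  also have "\<dots> = poly P r"
    by (simp add: poly_altdef)
  finally show ?thesis .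
qed

lemma sylvester_mat_sub_mult_powers:
  fixes f g :: "'a::comm_ring_1 poly"
  assumes df: "degree f \<le> n" and dg: "degree g \<le> m" and i: "i < n + m"
  shows "(sylvester_mat_sub n m f g *\<^sub>v vec (n + m) (\<lambda>j. r ^ (n + m - Suc j))) $ i =
    poly (if i < m then monom 1 (m - Suc i) * f else monom 1 (n + m - Suc i) * g) r"
    (is "_ = poly ?P r")
proof -
  let ?N = "n + m"
  let ?A = "sylvester_mat_sub n m f g"
  have entries: "?A $$ (i, j) = coeff ?P (?N - Suc j)" if j: "j < ?N" for j
  proof (cases "i < m")
    case True
    then have P: "?P = monom 1 (m - Suc i) * f" by simp
    show ?thesis
      using True i j df unfolding P coeff_monom_mult
      by (auto simp: sylvester_mat_sub_index coeff_eq_0 intro!: arg_cong[where f = "coeff f"])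
  next
    case False
    then have P: "?P = monom 1 (?N - Suc i) * g" by simp
    show ?thesis
      using False i j dg unfolding P coeff_monom_mult
      by (auto simp: sylvester_mat_sub_index coeff_eq_0 intro!: arg_cong[where f = "coeff g"])
  qed
  have "degree ?P < ?N"
  proof (cases "i < m")
    case True
    have "degree (monom (1::'a) (m - Suc i) * f) \<le> (m - Suc i) + n"
      by (meson add_mono degree_mult_le degree_monom_le df order_trans)
    with True show ?thesis by simp
  next
    case False
    have "degree (monom (1::'a) (?N - Suc i) * g) \<le> (?N - Suc i) + m"
      by (meson add_mono degree_mult_le degree_monom_le dg order_trans)
    with False i show ?thesis by simp
  qed
  then have "(\<Sum>j<?N. ?A $$ (i, j) * r ^ (?N - Suc j)) = poly ?P r"
    using entries by (simp add: sum_coeff_reversed_eq_poly[symmetric])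
  then show ?thesis
    using i by (simp add: mult_mat_vec_def scalar_prod_def atLeast0LessThan)
qed

lemma det_sylvester_mat_sub_common_root:
  fixes f g :: "'a::field poly"
  assumes "degree f \<le> n" and "degree g \<le> m" and "n + m \<ge> 1"
    and "poly f r = 0" and "poly g r = 0"
  shows "det (sylvester_mat_sub n m f g) = 0"
proof -
  let ?N = "n + m"
  define v where "v = vec ?N (\<lambda>j. r ^ (?N - Suc j))"
  have "?N - Suc (?N - 1) = 0"
    using assms(3) by simp
  then have "v $ (?N - 1) = 1"
    using assms(3) by (simp add: v_def)
  then have "v \<noteq> 0\<^sub>v ?N"
    using assms(3) by auto
  moreover have "sylvester_mat_sub n m f g *\<^sub>v v = 0\<^sub>v ?N"
  proof (rule eq_vecI)
    fix i
    assume "i < dim_vec (0\<^sub>v ?N :: 'a vec)"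
    then show "(sylvester_mat_sub n m f g *\<^sub>v v) $ i = 0\<^sub>v ?N $ i"
      using sylvester_mat_sub_mult_powers[OF assms(1,2), of i r] assms(4,5)
      by (simp add: v_def poly_monom)
  qed simp
  moreover have "v \<in> carrier_vec ?N"
    by (simp add: v_def)
  ultimately show ?thesis
    using det_0_iff_vec_prod_zero_field[of _ ?N] sylvester_mat_sub_carrier[of n m f g] by blast
qed

lemma poly_nonroot_exists_if_degree_less_CHAR:
  fixes H :: "'a::idom poly"
  assumes "H \<noteq> 0" and "degree H < CHAR('a)"
  shows "\<exists>r. poly H r \<noteq> 0"
proof (rule ccontr)
  assume "\<not> ?thesis"
  then have "of_nat ` {..<CHAR('a)} \<subseteq> {r::'a. poly H r = 0}"
    by auto
  then have "card (of_nat ` {..<CHAR('a)} :: 'a set) \<le> card {r::'a. poly H r = 0}"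
    using poly_roots_finite[OF assms(1)] by (intro card_mono) auto
  also have "\<dots> \<le> degree H"
    using assms(1) by (rule card_poly_roots_bound)
  also have "card (of_nat ` {..<CHAR('a)} :: 'a set) = CHAR('a)"
    by (subst card_image) (auto intro!: inj_onI simp: of_nat_eq_iff_cong_CHAR cong_def)
  finally show False
    using assms(2) by simp
qed

definition generic_f_at :: "nat \<Rightarrow> (nat \<Rightarrow> 'a::comm_ring_1) \<Rightarrow> 'a poly" where
  "generic_f_at n x = (\<Sum>i\<le>n. monom (x i) i)"

definition generic_g_at :: "nat \<Rightarrow> nat \<Rightarrow> (nat \<Rightarrow> 'a::comm_ring_1) \<Rightarrow> 'a poly" where
  "generic_g_at n m x = (\<Sum>j\<le>m. monom (x (n + 1 + j)) j)"

definition generic_res_at :: "nat \<Rightarrow> nat \<Rightarrow> (nat \<Rightarrow> 'a::comm_ring_1) \<Rightarrow> 'a" where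
  "generic_res_at n m x = det (sylvester_mat_sub n m (generic_f_at n x) (generic_g_at n m x))"

lemma coeff_generic_f_at: "coeff (generic_f_at n x) k = (if k \<le> n then x k else 0)"
  by (simp add: generic_f_at_def coeff_sum coeff_monom)

lemma coeff_generic_g_at: "coeff (generic_g_at n m x) k = (if k \<le> m then x (n + 1 + k) else 0)"
  by (simp add: generic_g_at_def coeff_sum coeff_monom)

lemma degree_generic_f_at: "degree (generic_f_at n x) \<le> n"
  by (rule degree_le) (simp add: coeff_generic_f_at)

lemma degree_generic_g_at: "degree (generic_g_at n m x) \<le> m"
  by (rule degree_le) (simp add: coeff_generic_g_at)

lemma poly_generic_f_at: "poly (generic_f_at n x) r = (\<Sum>i\<le>n. x i * r ^ i)"
  by (simp add: generic_f_at_def poly_sum poly_monom)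

lemma poly_generic_g_at: "poly (generic_g_at n m x) r = (\<Sum>j\<le>m. x (n + 1 + j) * r ^ j)"
  by (simp add: generic_g_at_def poly_sum poly_monom)

lemma mp_eval_generic_res: "mp_eval x (generic_res n m) = generic_res_at n m x"
proof -
  have "map_poly (mp_eval x) (generic_f n) = generic_f_at n x"
    by (rule poly_eqI)
      (simp add: coeff_map_poly coeff_generic_f_at generic_f_def coeff_sum coeff_monom)
  moreover have "map_poly (mp_eval x) (generic_g n m) = generic_g_at n m x"
    by (rule poly_eqI)
      (simp add: coeff_map_poly coeff_generic_g_at generic_g_def coeff_sum coeff_monom)
  ultimately show ?thesis
    unfolding generic_res_def generic_res_at_def mp_eval.hom_det[symmetric]
    by (simp add: sylvester_mat_sub_map)
qed

lemma generic_res_at_triangular: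
  assumes "(\<forall>k<n. x k = 0) \<or> (\<forall>j\<in>{1..m}. x (n + 1 + j) = 0)"
  shows "generic_res_at n m x = x n ^ m * x (n + 1) ^ n"
  unfolding generic_res_at_def using assms
  by (subst det_sylvester_mat_sub_triangular) (auto simp: coeff_generic_f_at coeff_generic_g_at)

lemma generic_res_at_common_root:
  fixes x :: "nat \<Rightarrow> 'a::field"
  assumes "n + m \<ge> 1"
    and "(\<Sum>i\<le>n. x i * r ^ i) = 0" and "(\<Sum>j\<le>m. x (n + 1 + j) * r ^ j) = 0"
  shows "generic_res_at n m x = 0"
  unfolding generic_res_at_def using assms
  by (intro det_sylvester_mat_sub_common_root[OF degree_generic_f_at degree_generic_g_at, where r = r])
    (auto simp: poly_generic_f_at poly_generic_g_at)

context
  fixes n m :: nat and u :: "nat \<Rightarrow> 'a::field"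
  assumes n_pos: "n \<ge> 1" and m_pos: "m \<ge> 1"
    and res_shift_invariant: "\<And>y. generic_res_at n m (\<lambda>i. y i + u i) = generic_res_at n m y"
begin

lemma shift_lead_coords_zero: "u n = 0" "u (n + 1) = 0"
proof -
  have lead: "s ^ m * t ^ n = (s + u n) ^ m * (t + u (n + 1)) ^ n" for s t
  proof -
    define y where "y i = (if i < n then - u i else if i = n then s else if i = n + 1 then t else 0)"
      for i
    have "generic_res_at n m y = s ^ m * t ^ n"
      by (subst generic_res_at_triangular) (auto simp: y_def)
    moreover have "generic_res_at n m (\<lambda>i. y i + u i) = (s + u n) ^ m * (t + u (n + 1)) ^ n"
      by (subst generic_res_at_triangular) (auto simp: y_def)
    ultimately show ?thesis
      using res_shift_invariant[of y] by simp
  qed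
  show "u n = 0"
    using lead[of "- u n" 1] m_pos by (simp add: zero_power)
  show "u (n + 1) = 0"
    using lead[of 1 "- u (n + 1)"] n_pos by (simp add: zero_power)
qed

text \<open>With \<open>H = \<Sum>\<^sub>k\<^sub>=\<^sub>1\<^sub>.\<^sub>.\<^sub>m u\<^sub>n\<^sub>+\<^sub>1\<^sub>+\<^sub>k x\<^sup>k\<close> and \<open>H(r) \<noteq> 0\<close>, take \<open>f\<^sub>y = x\<^sup>n - r\<^sup>n\<close> and
  \<open>g\<^sub>y = H(r) - \<Sum>\<^sub>k\<^sub>=\<^sub>1\<^sub>.\<^sub>.\<^sub>m u\<^sub>n\<^sub>+\<^sub>1\<^sub>+\<^sub>k x\<^sup>k\<close>: they share the root \<open>r\<close>, while \<open>g\<^sub>y\<^sub>+\<^sub>u = H(r)\<close> is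
  constant, so the shifted determinant is \<open>H(r)\<^sup>n \<noteq> 0\<close>.\<close>

lemma shift_g_coords_zero:
  assumes char: "m < CHAR('a)" and j: "1 \<le> j" "j \<le> m"
  shows "u (n + 1 + j) = 0"
proof (rule ccontr)
  assume nonzero: "u (n + 1 + j) \<noteq> 0"
  define H where "H = (\<Sum>k\<in>{1..m}. monom (u (n + 1 + k)) k)"
  have coeff_H: "coeff H k = (if 1 \<le> k \<and> k \<le> m then u (n + 1 + k) else 0)" for k
    by (simp add: H_def coeff_sum coeff_monom)
  have "H \<noteq> 0"
    using coeff_H[of j] j nonzero by auto
  moreover have "degree H < CHAR('a)"
    using char by (intro le_less_trans[OF degree_le]) (auto simp: coeff_H)
  ultimately obtain r where r: "poly H r \<noteq> 0"
    using poly_nonroot_exists_if_degree_less_CHAR by blast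
  have poly_H: "poly H r = (\<Sum>k\<in>{1..m}. u (n + 1 + k) * r ^ k)"
    by (simp add: H_def poly_sum poly_monom)
  define y where "y i = (if i = 0 then - (r ^ n) else if i < n then 0 else if i = n then 1
    else if i = n + 1 then poly H r else if i \<le> n + 1 + m then - u i else 0)" for i
  have "(\<Sum>i\<le>n. y i * r ^ i) = (\<Sum>i\<le>n. (if i = 0 then - (r ^ n) else 0) + (if i = n then r ^ n else 0))"
    using n_pos by (intro sum.cong) (auto simp: y_def)
  then have f_root: "(\<Sum>i\<le>n. y i * r ^ i) = 0"
    by (simp add: sum.distrib)
  have "{..m} = insert 0 {1..m}"
    by auto
  moreover have "(\<Sum>k\<in>{1..m}. y (n + 1 + k) * r ^ k) = - poly H r"
    unfolding poly_H sum_negf[symmetric] by (intro sum.cong) (auto simp: y_def)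
  ultimately have g_root: "(\<Sum>k\<le>m. y (n + 1 + k) * r ^ k) = 0"
    by (simp add: y_def)
  have "generic_res_at n m y = 0"
    using n_pos f_root g_root by (intro generic_res_at_common_root) auto
  moreover have "generic_res_at n m (\<lambda>i. y i + u i) = poly H r ^ n"
    using n_pos shift_lead_coords_zero by (subst generic_res_at_triangular) (auto simp: y_def)
  ultimately show False
    using res_shift_invariant[of y] r by simp
qed

text \<open>With \<open>h = \<Sum>\<^sub>i\<^sub><\<^sub>n u\<^sub>i r\<^sup>i\<close> and \<open>r h \<noteq> 0\<close>, take \<open>f\<^sub>y = (h / r\<^sup>n) x\<^sup>n - \<Sum>\<^sub>i\<^sub><\<^sub>n u\<^sub>i x\<^sup>i\<close>
  and \<open>g\<^sub>y = r - x\<close>: they share the root \<open>r\<close>, while \<open>f\<^sub>y\<^sub>+\<^sub>u = (h / r\<^sup>n) x\<^sup>n\<close>, so the shifted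
  determinant is \<open>(h / r\<^sup>n)\<^sup>m r\<^sup>n \<noteq> 0\<close>.\<close>

lemma shift_f_coords_zero:
  assumes char: "n < CHAR('a)" and k: "k < n"
  shows "u k = 0"
proof (rule ccontr)
  assume nonzero: "u k \<noteq> 0"
  define H where "H = (\<Sum>i<n. monom (u i) (Suc i))"
  have coeff_H: "coeff H l = (\<Sum>i<n. if Suc i = l then u i else 0)" for l
    by (simp add: H_def coeff_sum coeff_monom)
  have "coeff H (Suc k) = u k"
    unfolding coeff_H using k by simp
  then have "H \<noteq> 0"
    using nonzero by auto
  moreover have "degree H < CHAR('a)"
    using char by (intro le_less_trans[OF degree_le]) (auto simp: coeff_H intro!: sum.neutral)
  ultimately obtain r where "poly H r \<noteq> 0"
    using poly_nonroot_exists_if_degree_less_CHAR by blast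
  moreover define h where "h = (\<Sum>i<n. u i * r ^ i)"
  moreover have "poly H r = r * h"
    by (simp add: H_def h_def poly_sum poly_monom sum_distrib_left algebra_simps)
  ultimately have r: "r \<noteq> 0" and h: "h \<noteq> 0"
    by auto
  define y where "y i = (if i < n then - u i else if i = n then h / r ^ n
    else if i = n + 1 then r else if i = n + 2 then -1 else 0)" for i
  have "(\<Sum>i\<le>n. y i * r ^ i) = (\<Sum>i<n. y i * r ^ i) + y n * r ^ n"
    by (simp add: lessThan_Suc_atMost[symmetric])
  also have "\<dots> = - h + h"
    using r by (simp add: h_def y_def sum_negf[symmetric])
  finally have f_root: "(\<Sum>i\<le>n. y i * r ^ i) = 0"
    by simp
  have "(\<Sum>j\<le>m. y (n + 1 + j) * r ^ j) = (\<Sum>j\<le>m. (if j = 0 then r else 0) + (if j = 1 then - r else 0))"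
    by (intro sum.cong) (auto simp: y_def)
  then have g_root: "(\<Sum>j\<le>m. y (n + 1 + j) * r ^ j) = 0"
    using m_pos by (simp add: sum.distrib)
  have "generic_res_at n m y = 0"
    using n_pos f_root g_root by (intro generic_res_at_common_root) auto
  moreover have "generic_res_at n m (\<lambda>i. y i + u i) = (h / r ^ n) ^ m * r ^ n"
    using n_pos shift_lead_coords_zero by (subst generic_res_at_triangular) (auto simp: y_def)
  ultimately show False
    using res_shift_invariant[of y] r h by simp
qed

lemma shift_coords_zero:
  assumes "n < CHAR('a)" and "m < CHAR('a)" and "i < n + m + 2"
  shows "u i = 0"
proof (cases "i \<le> n + 1")
  case True
  then consider "i < n" | "i = n" | "i = n + 1"
    by linarith
  then show ?thesis
    using assms(1) shift_lead_coords_zero shift_f_coords_zero by cases auto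
next
  case False
  then have "i = n + 1 + (i - n - 1)" "1 \<le> i - n - 1" "i - n - 1 \<le> m"
    using assms(3) by auto
  then show ?thesis
    using shift_g_coords_zero[OF assms(2)] by metis
qed

end

theorem mainTheorem18:
  fixes p n m :: nat
    and u :: "nat \<Rightarrow> 'a::{finite,field}"
  assumes "prime p" and "CHAR('a) = p"
    and "n \<ge> 1" and "m \<ge> 1" and "p > n + m + 2"
    and "\<forall>i \<ge> n + m + 2. u i = 0"
    and "mp_shift (generic_res n m :: 'a mpoly) u = generic_res n m"
  shows "\<forall>i < n + m + 2. u i = 0"
proof (intro allI impI)
  fix i
  assume "i < n + m + 2"
  moreover have "generic_res_at n m (\<lambda>i. y i + u i) = generic_res_at n m y" for y
    using mp_eval_shift_invariant[OF assms(7), of y] by (simp add: mp_eval_generic_res)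
  ultimately show "u i = 0"
    using assms(2-5) by (intro shift_coords_zero[of n m u]) auto
qed

end
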